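(* Let $M$ be a real $4$-dimensional manifold with local coordinates $q^1,\dots,q^4$, and write $\phi_{\mu\nu}=\partial_{q^\mu}\partial_{q^\nu}\phi$. None of the following Monge–Ampère equations for a real function $\phi$ corresponds to the variational problem of a first-order Lagrangian function $L(q^\mu,\phi,\phi_\mu)$ (i.e. none of them is, up to multiplication by a non-vanishing function, the Euler–Lagrange equation of such an $L$): (1) first Plebański heavenly equation $\phi_{13}\phi_{24}-\phi_{14}\phi_{23}=1$; (2) second Plebański heavenly equation $\phi_{11}\phi_{22}-(\phi_{12})^2+\phi_{13}+\phi_{24}=0$; (3) Grant equation $\phi_{11}+\phi_{24}\phi_{13}-\phi_{23}\phi_{14}=0$; (4) Husain equation $\phi_{13}\phi_{24}-\phi_{14}\phi_{23}+\phi_{11}+\phi_{22}=0$.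
   Context: A first-order Lagrangian function is a smooth function $L(q^\mu,\phi,\phi_\mu)$ of the coordinates, the field and its first derivatives $\phi_\mu=\partial_{q^\mu}\phi$; its Euler–Lagrange equation is $\frac{\partial L}{\partial\phi}-\frac{\partial}{\partial q^\mu}\frac{\partial L}{\partial\phi_\mu}=0$. *)

theory Defs
  imports "HOL-Analysis.Analysis"
begin

definition dd :: "'a::real_normed_vector \<Rightarrow> ('a \<Rightarrow> real) \<Rightarrow> 'a \<Rightarrow> real" where
  "dd v f x = deriv (\<lambda>t. f (x + t *\<^sub>R v)) 0"

definition smooth_on :: "'a::euclidean_space set \<Rightarrow> ('a \<Rightarrow> real) \<Rightarrow> bool" where
  "smooth_on S f \<longleftrightarrow>
     (\<forall>vs. set vs \<subseteq> Basis \<longrightarrow>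
        continuous_on S (foldr dd vs f) \<and>
        (\<forall>x\<in>S. \<forall>v\<in>Basis. (\<lambda>t. foldr dd vs f (x + t *\<^sub>R v)) differentiable (at 0)))"

text \<open>Coordinates q^1..q^4 are the indices 1,2,3,4 of the numeral type 4
  (four distinct elements).  Partial derivative in q^i.\<close>
definition pd :: "4 \<Rightarrow> (real^4 \<Rightarrow> real) \<Rightarrow> real^4 \<Rightarrow> real" where
  "pd i f q = dd (axis i 1) f q"

definition grad :: "(real^4 \<Rightarrow> real) \<Rightarrow> real^4 \<Rightarrow> real^4" where
  "grad \<phi> q = (\<chi> i. pd i \<phi> q)"

definition hess :: "(real^4 \<Rightarrow> real) \<Rightarrow> real^4 \<Rightarrow> real^4^4" where
  "hess \<phi> q = (\<chi> i j. pd i (pd j \<phi>) q)"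

definition EL :: "((real^4) \<times> real \<times> (real^4) \<Rightarrow> real) \<Rightarrow> (real^4 \<Rightarrow> real) \<Rightarrow> real^4 \<Rightarrow> real" where
  "EL L \<phi> q =
     dd (0, 1, 0) L (q, \<phi> q, grad \<phi> q)
     - (\<Sum>\<mu>\<in>UNIV. pd \<mu> (\<lambda>x. dd (0, 0, axis \<mu> 1) L (x, \<phi> x, grad \<phi> x)) q)"

definition first_order_variational ::
  "(real^4) set \<Rightarrow> ((real^4) \<times> real \<times> (real^4) \<times> (real^4^4) \<Rightarrow> real) \<Rightarrow> bool" where
  "first_order_variational U E \<longleftrightarrow>
     (\<exists>L f. smooth_on (U \<times> UNIV) L \<and>
            smooth_on (U \<times> UNIV) f \<and>
            (\<forall>z\<in>U \<times> UNIV. f z \<noteq> 0) \<and>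
            (\<forall>\<phi>. smooth_on U \<phi> \<longrightarrow>
               (\<forall>q\<in>U. EL L \<phi> q =
                   f (q, \<phi> q, grad \<phi> q, hess \<phi> q) * E (q, \<phi> q, grad \<phi> q, hess \<phi> q))))"

definition heavenly1 :: "(real^4) \<times> real \<times> (real^4) \<times> (real^4^4) \<Rightarrow> real" where
  "heavenly1 z = (case z of (q, u, p, H) \<Rightarrow>
     H$1$3 * H$2$4 - H$1$4 * H$2$3 - 1)"

definition heavenly2 :: "(real^4) \<times> real \<times> (real^4) \<times> (real^4^4) \<Rightarrow> real" where
  "heavenly2 z = (case z of (q, u, p, H) \<Rightarrow>
     H$1$1 * H$2$2 - (H$1$2)^2 + H$1$3 + H$2$4)"

definition grant_eq :: "(real^4) \<times> real \<times> (real^4) \<times> (real^4^4) \<Rightarrow> real" where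
  "grant_eq z = (case z of (q, u, p, H) \<Rightarrow>
     H$1$1 + H$2$4 * H$1$3 - H$2$3 * H$1$4)"

definition husain_eq :: "(real^4) \<times> real \<times> (real^4) \<times> (real^4^4) \<Rightarrow> real" where
  "husain_eq z = (case z of (q, u, p, H) \<Rightarrow>
     H$1$3 * H$2$4 - H$1$4 * H$2$3 + H$1$1 + H$2$2)"

end

theory Submission
  imports Defs
begin

(*
  The Euler--Lagrange expression of a first-order Lagrangian is affine in the second
  derivatives of phi.  Test the identity EL L phi = f * E with the quadratic function phi whose
  value, gradient and Hessian at a point a are 0, 0 and H: the map H |-> f(a,0,0,H) * E(a,0,0,H)
  must then be affine.  Each of the four equations vanishes at two Hessians H + K and H - K but
  not at their midpoint H, which forces f(a,0,0,H) = 0.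
*)

lemma open_contains_plane_neighbourhood:
  fixes v w :: "'a::real_normed_vector"
  assumes "open S" "a \<in> S"
  obtains r where "r > 0" "\<And>s t. \<bar>s\<bar> < r \<Longrightarrow> \<bar>t\<bar> < r \<Longrightarrow> a + s *\<^sub>R v + t *\<^sub>R w \<in> S"
proof -
  obtain e where "e > 0" and e: "ball a e \<subseteq> S"
    using assms open_contains_ball by blast
  have N: "norm v + norm w + 1 > 0"
    by (simp add: add_nonneg_pos)
  define r where "r = e / (norm v + norm w + 1)"
  have "r > 0"
    using \<open>e > 0\<close> N by (simp add: r_def)
  moreover have "a + s *\<^sub>R v + t *\<^sub>R w \<in> S" if "\<bar>s\<bar> < r" "\<bar>t\<bar> < r" for s t
  proof -
    have "norm (s *\<^sub>R v + t *\<^sub>R w) \<le> \<bar>s\<bar> * norm v + \<bar>t\<bar> * norm w"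
      by (metis norm_scaleR norm_triangle_ineq real_norm_def)
    also have "\<dots> \<le> r * (norm v + norm w)"
      using that by (auto simp: distrib_left intro!: add_mono mult_right_mono)
    also have "\<dots> < r * (norm v + norm w + 1)"
      using \<open>r > 0\<close> by simp
    also have "\<dots> = e"
      using N by (simp add: r_def)
    finally have "a + (s *\<^sub>R v + t *\<^sub>R w) \<in> ball a e"
      using dist_add_cancel[of a 0 "s *\<^sub>R v + t *\<^sub>R w"] by simp
    then show ?thesis
      using e by (auto simp: add.assoc)
  qed
  ultimately show ?thesis
    using that by blast
qed

(* smooth_on only supplies partial derivatives along basis vectors; derivatives along the oblique
   lines needed below are assembled from them by the continuous-partials criterion. *)
lemma has_derivative_on_plane:
  fixes g :: "'a::real_normed_vector \<Rightarrow> real"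
  assumes "open S" "a \<in> S"
    and dv: "((\<lambda>t. g (a + t *\<^sub>R v)) has_real_derivative D) (at 0)"
    and dw: "\<And>x. x \<in> S \<Longrightarrow> ((\<lambda>t. g (x + t *\<^sub>R w)) has_real_derivative Dw x) (at 0)"
    and "continuous_on S Dw"
  shows "((\<lambda>(s, t). g (a + s *\<^sub>R v + t *\<^sub>R w)) has_derivative (\<lambda>(hs, ht). D * hs + Dw a * ht))
           (at (0, 0))"
proof -
  obtain r where "r > 0" and r: "\<And>s t. \<bar>s\<bar> < r \<Longrightarrow> \<bar>t\<bar> < r \<Longrightarrow> a + s *\<^sub>R v + t *\<^sub>R w \<in> S"
    using open_contains_plane_neighbourhood[OF assms(1,2)] by blast
  define B where "B = ball (0::real) r"
  define p where "p = (\<lambda>(s, t). a + s *\<^sub>R v + t *\<^sub>R w)"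
  have pS: "p (s, t) \<in> S" if "s \<in> B" "t \<in> B" for s t
    using r that by (simp add: B_def p_def)
  have "continuous_on (B \<times> B) (Dw \<circ> p)"
  proof (rule continuous_on_compose)
    show "continuous_on (B \<times> B) p"
      unfolding p_def split_beta' by (intro continuous_intros)
    show "continuous_on (p ` (B \<times> B)) Dw"
      using pS by (intro continuous_on_subset[OF assms(5)]) auto
  qed
  then have cont: "continuous (at (0, 0) within B \<times> B) (\<lambda>(s, t). blinfun_mult_right (Dw (p (s, t))))"
    using \<open>r > 0\<close> by (auto simp: B_def continuous_on_eq_continuous_within split_beta' o_def
        intro!: continuous_intros)
  have "((\<lambda>(s, t). g (p (s, t))) has_derivative (\<lambda>(hs, ht). D * hs + blinfun_mult_right (Dw (p (0, 0))) ht))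
          (at (0, 0) within B \<times> B)"
  proof (rule has_derivative_partialsI[OF _ _ cont])
    show "((\<lambda>s. g (p (s, 0))) has_derivative (*) D) (at 0 within B)"
      using dv by (simp add: p_def has_field_derivative_def has_derivative_at_withinI)
    show "((\<lambda>t. g (p (s, t))) has_derivative blinfun_mult_right (Dw (p (s, t)))) (at t within B)"
      if "s \<in> B" "t \<in> B" for s t
    proof -
      have "((\<lambda>h. g (p (s, t) + h *\<^sub>R w)) has_real_derivative Dw (p (s, t))) (at 0)"
        using dw pS that by blast
      then have "((\<lambda>h. g (p (s, h + t))) has_real_derivative Dw (p (s, t))) (at 0)"
        by (simp add: p_def scaleR_add_left add_ac)
      then have "((\<lambda>h. g (p (s, h))) has_real_derivative Dw (p (s, t))) (at t)"
        using DERIV_shift[of "\<lambda>h. g (p (s, h))" _ 0 t] by simp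
      then show ?thesis
        by (simp add: has_field_derivative_eq_has_derivative_blinfun has_derivative_at_withinI)
    qed
  qed (auto simp: B_def \<open>r > 0\<close>)
  moreover have "at (0, 0) within B \<times> B = at (0, 0)"
    using \<open>r > 0\<close> by (intro at_within_open) (auto simp: B_def open_Times)
  ultimately show ?thesis
    by (simp add: p_def)
qed

lemma has_real_derivative_along_add_direction:
  fixes g :: "'a::real_normed_vector \<Rightarrow> real"
  assumes "open S" "a \<in> S"
    and "((\<lambda>t. g (a + t *\<^sub>R v)) has_real_derivative D) (at 0)"
    and "\<And>x. x \<in> S \<Longrightarrow> ((\<lambda>t. g (x + t *\<^sub>R w)) has_real_derivative Dw x) (at 0)"
    and "continuous_on S Dw"
  shows "((\<lambda>t. g (a + t *\<^sub>R (v + w))) has_real_derivative D + Dw a) (at 0)"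
proof -
  from has_derivative_compose[OF has_derivative_Pair[OF has_derivative_ident has_derivative_ident]
      has_derivative_on_plane[OF assms]]
  have "((\<lambda>t. g (a + t *\<^sub>R v + t *\<^sub>R w)) has_derivative (\<lambda>h. D * h + Dw a * h)) (at 0)"
    by simp
  moreover have "(\<lambda>h. D * h + Dw a * h) = (*) (D + Dw a)"
    by (auto simp: distrib_right)
  ultimately show ?thesis
    by (simp add: has_field_derivative_def scaleR_add_right add.assoc)
qed

lemma has_real_derivative_along_sum_directions:
  fixes g :: "'a::real_normed_vector \<Rightarrow> real" and w :: "'i \<Rightarrow> 'a"
  assumes "open S" "a \<in> S" "finite I"
    and "((\<lambda>t. g (a + t *\<^sub>R v)) has_real_derivative D) (at 0)"
    and "\<And>i x. i \<in> I \<Longrightarrow> x \<in> S \<Longrightarrow> ((\<lambda>t. g (x + t *\<^sub>R w i)) has_real_derivative Dw i x) (at 0)"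
    and "\<And>i. i \<in> I \<Longrightarrow> continuous_on S (Dw i)"
  shows "((\<lambda>t. g (a + t *\<^sub>R (v + (\<Sum>i\<in>I. c i *\<^sub>R w i)))) has_real_derivative
            D + (\<Sum>i\<in>I. c i * Dw i a)) (at 0)"
  using assms(3,5,6)
proof (induction I rule: finite_induct)
  case empty
  then show ?case using assms(4) by simp
next
  case (insert j I)
  then have IH: "((\<lambda>t. g (a + t *\<^sub>R (v + (\<Sum>i\<in>I. c i *\<^sub>R w i)))) has_real_derivative
            D + (\<Sum>i\<in>I. c i * Dw i a)) (at 0)"
    by simp
  have step: "((\<lambda>t. g (x + t *\<^sub>R (c j *\<^sub>R w j))) has_real_derivative c j * Dw j x) (at 0)"
    if "x \<in> S" for x
  proof -
    have "((\<lambda>t. g (x + t *\<^sub>R w j)) has_real_derivative Dw j x) (at (c j * 0))"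
      using insert.prems(1) that by simp
    from DERIV_chain2[OF this DERIV_cmult_Id]
    show ?thesis by (simp add: mult.commute)
  qed
  have "continuous_on S (\<lambda>x. c j * Dw j x)"
    using insert.prems(2) by (auto intro!: continuous_intros)
  from has_real_derivative_along_add_direction[OF assms(1,2) IH step this]
  show ?case
    using insert.hyps by (simp add: add_ac)
qed

lemma smooth_on_dd:
  assumes "smooth_on S f" "v \<in> Basis"
  shows "smooth_on S (dd v f)"
  unfolding smooth_on_def
proof (intro allI impI)
  fix vs :: "'a list"
  assume "set vs \<subseteq> Basis"
  then have "set (vs @ [v]) \<subseteq> Basis"
    using assms(2) by simp
  moreover have "foldr dd vs (dd v f) = foldr dd (vs @ [v]) f"
    by simp
  ultimately show "continuous_on S (foldr dd vs (dd v f)) \<and>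
      (\<forall>x\<in>S. \<forall>w\<in>Basis. (\<lambda>t. foldr dd vs (dd v f) (x + t *\<^sub>R w)) differentiable at 0)"
    using assms(1) unfolding smooth_on_def by presburger
qed

lemma smooth_on_imp_continuous_on: "smooth_on S f \<Longrightarrow> continuous_on S f"
  unfolding smooth_on_def by (metis empty_subsetI foldr_Nil id_apply list.set(1))

lemma smooth_on_has_real_derivative_dd:
  assumes "smooth_on S f" "x \<in> S" "v \<in> Basis"
  shows "((\<lambda>t. f (x + t *\<^sub>R v)) has_real_derivative dd v f x) (at 0)"
proof -
  have "(\<lambda>t. f (x + t *\<^sub>R v)) differentiable at 0"
    using assms unfolding smooth_on_def by (metis empty_subsetI foldr_Nil id_apply list.set(1))
  then show ?thesis
    unfolding dd_def by (simp only: DERIV_deriv_iff_real_differentiable)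
qed

definition quadratic :: "real \<Rightarrow> real^'n \<Rightarrow> real^'n^'n \<Rightarrow> real^'n \<Rightarrow> real^'n \<Rightarrow> real" where
  "quadratic c b M a x = c + b \<bullet> (x - a) + (x - a) \<bullet> (M *v (x - a))"

lemma quadratic_along_line:
  "quadratic c b M a (x + t *\<^sub>R v) =
     quadratic c b M a x + t * quadratic (b \<bullet> v) ((M + transpose M) *v v) 0 a x
     + t\<^sup>2 * (v \<bullet> (M *v v))"
proof -
  define y where "y = x - a"
  have "x + t *\<^sub>R v - a = y + t *\<^sub>R v"
    by (simp add: y_def)
  then show ?thesis
    unfolding quadratic_def y_def[symmetric]
    by (simp add: dot_lmul_matrix matrix_vector_mult_add_rdistrib matrix_vector_right_distrib
        matrix_vector_mult_scaleR inner_add_left inner_add_right inner_commute[of y]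
        power2_eq_square algebra_simps)
qed

lemma has_real_derivative_quadratic_along_line:
  "((\<lambda>t. quadratic c b M a (x + t *\<^sub>R v)) has_real_derivative
     quadratic (b \<bullet> v) ((M + transpose M) *v v) 0 a x) (at 0)"
  unfolding quadratic_along_line by (auto intro!: derivative_eq_intros)

lemma dd_quadratic: "dd v (quadratic c b M a) = quadratic (b \<bullet> v) ((M + transpose M) *v v) 0 a"
  by (simp add: dd_def DERIV_imp_deriv[OF has_real_derivative_quadratic_along_line] fun_eq_iff)

lemma smooth_on_quadratic: "smooth_on S (quadratic c b M a)"
proof -
  have "\<exists>c' b' M'. foldr dd vs (quadratic c b M a) = quadratic c' b' M' a" for vs
    by (induction vs) (auto simp: dd_quadratic, blast)
  moreover have "continuous_on S (quadratic c b M a)" for c b M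
    unfolding quadratic_def
    by (intro continuous_intros bounded_linear.continuous_on[OF matrix_vector_mul_bounded_linear])
  ultimately show ?thesis
    using has_real_derivative_quadratic_along_line unfolding smooth_on_def real_differentiable_def
    by metis
qed

(* Test Hessians have zero diagonal: then the test function vanishes on the coordinate axes
   through its centre, so L is only differentiated along straight lines. *)
definition hollow_symmetric :: "real^'n^'n \<Rightarrow> bool" where
  "hollow_symmetric H \<longleftrightarrow> transpose H = H \<and> (\<forall>i. H $ i $ i = 0)"

lemma hollow_symmetric_add: "hollow_symmetric A \<Longrightarrow> hollow_symmetric B \<Longrightarrow> hollow_symmetric (A + B)"
  by (auto simp: hollow_symmetric_def transpose_def vec_eq_iff)

lemma hollow_symmetric_diff: "hollow_symmetric A \<Longrightarrow> hollow_symmetric B \<Longrightarrow> hollow_symmetric (A - B)"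
  by (auto simp: hollow_symmetric_def transpose_def vec_eq_iff)

definition quadratic_with_hessian :: "real^'n \<Rightarrow> real^'n^'n \<Rightarrow> real^'n \<Rightarrow> real" where
  "quadratic_with_hessian a H = quadratic 0 0 ((1/2) *\<^sub>R H) a"

lemma smooth_on_quadratic_with_hessian: "smooth_on S (quadratic_with_hessian a H)"
  by (simp add: quadratic_with_hessian_def smooth_on_quadratic)

lemma quadratic_with_hessian_center: "quadratic_with_hessian a H a = 0"
  by (simp add: quadratic_with_hessian_def quadratic_def)

lemma pd_quadratic_with_hessian:
  assumes "transpose H = H"
  shows "pd i (quadratic_with_hessian a H) = quadratic 0 (H *v axis i 1) 0 a"
proof -
  have "(1/2) *\<^sub>R H + transpose ((1/2) *\<^sub>R H) = H"
    using assms by (simp add: transpose_scalar flip: scaleR_add_right)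
  then show ?thesis
    by (simp add: pd_def[abs_def] quadratic_with_hessian_def dd_quadratic)
qed

lemma grad_quadratic_with_hessian:
  assumes "transpose H = H"
  shows "grad (quadratic_with_hessian a H) q = H *v (q - a)"
proof -
  have "(H *v axis i 1) \<bullet> (q - a) = (axis i 1 v* H) \<bullet> (q - a)" for i
    using assms by (metis transpose_matrix_vector)
  also have "\<dots> i = (H *v (q - a)) $ i" for i
    by (simp add: dot_lmul_matrix inner_axis')
  finally show ?thesis
    using assms by (simp add: grad_def pd_quadratic_with_hessian quadratic_def vec_eq_iff)
qed

lemma hess_quadratic_with_hessian:
  assumes "transpose H = H"
  shows "hess (quadratic_with_hessian a H) q = H"
proof -
  have "(\<chi> i. 0) = (0 :: real^4)"
    by (simp add: vec_eq_iff)
  then have "pd i (quadratic 0 (H *v axis j 1) 0 a) q = H $ i $ j" for i j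
    by (simp add: pd_def dd_quadratic quadratic_def transpose_def inner_axis
        matrix_vector_mult_basis column_def)
  then show ?thesis
    using assms by (simp add: hess_def pd_quadratic_with_hessian vec_eq_iff)
qed

lemma quadratic_with_hessian_along_axis:
  assumes "hollow_symmetric H"
  shows "quadratic_with_hessian a H (a + t *\<^sub>R axis m 1) = 0"
  using assms by (simp add: quadratic_with_hessian_def quadratic_def hollow_symmetric_def
      matrix_vector_mult_scaleR inner_axis' matrix_vector_mult_basis column_def)

lemma pd_along_quadratic_with_hessian:
  fixes g :: "(real^4) \<times> real \<times> (real^4) \<Rightarrow> real"
  assumes "open U" "a \<in> U" "smooth_on (U \<times> UNIV) g" "hollow_symmetric H"
  defines "\<phi> \<equiv> quadratic_with_hessian a H"
  shows "pd m (\<lambda>x. g (x, \<phi> x, grad \<phi> x)) a =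
           dd (axis m 1, 0, 0) g (a, 0, 0) + (\<Sum>s\<in>UNIV. H $ s $ m * dd (0, 0, axis s 1) g (a, 0, 0))"
proof -
  let ?S = "U \<times> (UNIV :: (real \<times> (real^4)) set)"
  let ?z = "(a, 0, 0) :: (real^4) \<times> real \<times> (real^4)"
  have S: "open ?S" "?z \<in> ?S"
    using assms(1,2) by (auto intro: open_Times)
  have basis: "((axis m 1, 0, 0) :: (real^4) \<times> real \<times> (real^4)) \<in> Basis"
    "\<And>s. ((0, 0, axis s 1) :: (real^4) \<times> real \<times> (real^4)) \<in> Basis"
    by (simp_all add: Basis_prod_def zero_prod_def)
  have "((\<lambda>t. g (?z + t *\<^sub>R ((axis m 1, 0, 0) + (\<Sum>s\<in>UNIV. H $ s $ m *\<^sub>R (0, 0, axis s 1)))))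
          has_real_derivative dd (axis m 1, 0, 0) g ?z + (\<Sum>s\<in>UNIV. H $ s $ m * dd (0, 0, axis s 1) g ?z))
        (at 0)"
    using basis(2) smooth_on_dd[OF assms(3) basis(2)]
    by (intro has_real_derivative_along_sum_directions[OF S finite]
        smooth_on_has_real_derivative_dd[OF assms(3) S(2) basis(1)]
        smooth_on_has_real_derivative_dd[OF assms(3)] smooth_on_imp_continuous_on)
  moreover have "(\<Sum>s\<in>UNIV. H $ s $ m *\<^sub>R axis s 1) = H *v axis m 1"
    using basis_expansion[of "H *v axis m 1"]
    by (simp add: matrix_vector_mult_basis column_def scalar_mult_eq_scaleR)
  then have "(\<Sum>s\<in>UNIV. H $ s $ m *\<^sub>R (0, 0, axis s 1)) = ((0, 0, H *v axis m 1) :: (real^4) \<times> real \<times> (real^4))"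
    by (simp add: prod_eq_iff fst_sum snd_sum)
  then have "?z + t *\<^sub>R ((axis m 1, 0, 0) + (\<Sum>s\<in>UNIV. H $ s $ m *\<^sub>R (0, 0, axis s 1))) =
      (a + t *\<^sub>R axis m 1, \<phi> (a + t *\<^sub>R axis m 1), grad \<phi> (a + t *\<^sub>R axis m 1))" for t
    using assms(4)
    by (simp add: \<phi>_def hollow_symmetric_def quadratic_with_hessian_along_axis
        grad_quadratic_with_hessian matrix_vector_mult_scaleR)
  ultimately show ?thesis
    unfolding pd_def dd_def[of "axis m 1"] by (simp add: DERIV_imp_deriv)
qed

lemma EL_quadratic_with_hessian_affine:
  assumes "open U" "a \<in> U" "smooth_on (U \<times> UNIV) L"
  obtains c C where "\<And>H. hollow_symmetric H \<Longrightarrow>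
    EL L (quadratic_with_hessian a H) a = c + (\<Sum>\<mu>\<in>UNIV. \<Sum>s\<in>UNIV. C \<mu> s * H $ s $ \<mu>)"
proof
  fix H :: "real^4^4"
  assume H: "hollow_symmetric H"
  then have "grad (quadratic_with_hessian a H) a = 0"
    by (simp add: grad_quadratic_with_hessian hollow_symmetric_def)
  moreover have "smooth_on (U \<times> UNIV) (dd (0, 0, axis \<mu> 1) L)" for \<mu>
    using assms(3) by (rule smooth_on_dd) (simp add: Basis_prod_def zero_prod_def)
  ultimately show "EL L (quadratic_with_hessian a H) a =
      (dd (0, 1, 0) L (a, 0, 0) - (\<Sum>\<mu>\<in>UNIV. dd (axis \<mu> 1, 0, 0) (dd (0, 0, axis \<mu> 1) L) (a, 0, 0)))
      + (\<Sum>\<mu>\<in>UNIV. \<Sum>s\<in>UNIV. - dd (0, 0, axis s 1) (dd (0, 0, axis \<mu> 1) L) (a, 0, 0) * H $ s $ \<mu>)"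
    using pd_along_quadratic_with_hessian[OF assms(1,2) _ H]
    by (simp add: EL_def quadratic_with_hessian_center sum.distrib sum_negf algebra_simps)
qed

lemma not_first_order_variational_by_midpoint:
  assumes "open U" "U \<noteq> {}" "hollow_symmetric H" "hollow_symmetric K"
    and "\<And>q. q \<in> U \<Longrightarrow> E (q, 0, 0, H + K) = 0"
    and "\<And>q. q \<in> U \<Longrightarrow> E (q, 0, 0, H - K) = 0"
    and "\<And>q. q \<in> U \<Longrightarrow> E (q, 0, 0, H) \<noteq> 0"
  shows "\<not> first_order_variational U E"
proof
  assume "first_order_variational U E"
  then obtain L f where L: "smooth_on (U \<times> UNIV) L" and f: "\<forall>z\<in>U \<times> UNIV. f z \<noteq> 0"
    and EL: "\<And>\<phi>. smooth_on U \<phi> \<Longrightarrow> \<forall>q\<in>U. EL L \<phi> q =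
               f (q, \<phi> q, grad \<phi> q, hess \<phi> q) * E (q, \<phi> q, grad \<phi> q, hess \<phi> q)"
    unfolding first_order_variational_def by blast
  obtain a where a: "a \<in> U"
    using assms(2) by blast
  obtain c C where affine: "\<And>H. hollow_symmetric H \<Longrightarrow>
      EL L (quadratic_with_hessian a H) a = c + (\<Sum>\<mu>\<in>UNIV. \<Sum>s\<in>UNIV. C \<mu> s * H $ s $ \<mu>)"
    using EL_quadratic_with_hessian_affine[OF assms(1) a L] by blast
  define lin where "lin M = c + (\<Sum>\<mu>\<in>UNIV. \<Sum>s\<in>UNIV. C \<mu> s * M $ s $ \<mu>)" for M :: "real^4^4"
  have lin: "lin M = f (a, 0, 0, M) * E (a, 0, 0, M)" if "hollow_symmetric M" for M
    using EL[of "quadratic_with_hessian a M"] affine[OF that] a that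
    by (simp add: lin_def smooth_on_quadratic_with_hessian hollow_symmetric_def
        quadratic_with_hessian_center grad_quadratic_with_hessian hess_quadratic_with_hessian)
  have "lin (H + K) = 0" "lin (H - K) = 0"
    using lin assms(3-6) a by (simp_all add: hollow_symmetric_add hollow_symmetric_diff)
  moreover have "lin (H + K) + lin (H - K) = 2 * lin H"
    by (simp add: lin_def algebra_simps sum.distrib sum_subtractf)
  ultimately have "f (a, 0, 0, H) * E (a, 0, 0, H) = 0"
    using lin[OF assms(3)] by simp
  then show False
    using f assms(7) a by auto
qed

definition symmetric_unit :: "'n \<Rightarrow> 'n \<Rightarrow> real^'n^'n" where
  "symmetric_unit i j = (\<chi> r s. if r = i \<and> s = j \<or> r = j \<and> s = i then 1 else 0)"

lemma hollow_symmetric_symmetric_unit: "i \<noteq> j \<Longrightarrow> hollow_symmetric (symmetric_unit i j)"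
  by (auto simp: hollow_symmetric_def symmetric_unit_def transpose_def vec_eq_iff)

theorem mainTheorem6:
  fixes U :: "(real^4) set"
  assumes "open U" and "U \<noteq> {}"
  shows "\<not> first_order_variational U heavenly1 \<and>
         \<not> first_order_variational U heavenly2 \<and>
         \<not> first_order_variational U grant_eq \<and>
         \<not> first_order_variational U husain_eq"
proof -
  have zero: "hollow_symmetric (0 :: real^4^4)"
    by (simp add: hollow_symmetric_def transpose_def vec_eq_iff)
  have hollow: "hollow_symmetric (symmetric_unit 1 3 + symmetric_unit 2 4 :: real^4^4)"
    "hollow_symmetric (symmetric_unit 2 3 + symmetric_unit 1 4 :: real^4^4)"
    "hollow_symmetric (symmetric_unit 1 3 :: real^4^4)"
    "hollow_symmetric (symmetric_unit 1 2 :: real^4^4)"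
    by (simp_all add: hollow_symmetric_add hollow_symmetric_symmetric_unit)
  show ?thesis
  proof (intro conjI)
    show "\<not> first_order_variational U heavenly1"
      by (rule not_first_order_variational_by_midpoint[OF assms zero hollow(1)])
        (auto simp: symmetric_unit_def heavenly1_def)
    show "\<not> first_order_variational U heavenly2"
      by (rule not_first_order_variational_by_midpoint[OF assms hollow(3,4)])
        (auto simp: symmetric_unit_def heavenly2_def)
    show "\<not> first_order_variational U grant_eq"
      by (rule not_first_order_variational_by_midpoint[OF assms hollow(1,2)])
        (auto simp: symmetric_unit_def grant_eq_def)
    show "\<not> first_order_variational U husain_eq"
      by (rule not_first_order_variational_by_midpoint[OF assms hollow(1,2)])
        (auto simp: symmetric_unit_def husain_eq_def)
  qed
qed

end
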